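(* Let $C'$, $S$ and $\widehat C$ be as in the context, and let $C$ be a column whose entries are a rearrangement of the elements of $S$ such that the two-column configuration $(C,C')$ is HHL. If there exist two distinct pivot entries $x,y$ of $\widehat C$ such that the transposition of $x$ and $y$ is legal with respect to $(C,C')$, then $(\widehat C,C')$ does not satisfy the Non-overlapping Condition.
   Context: A column is a finite sequence of entries listed top to bottom. $C'=(C'(1),\ldots,C'(c'))$ is a sequence of distinct positive integers and $S$ is a set of $c$ positive integers, $c\in\{c',c'+1\}$, such that with $s_1<\cdots<s_c$ the elements of $S$ and $t_1<\cdots<t_{c'}$ the entries of $C'$ sorted, $s_r\le t_r$ for $r\le c'$. The column $\widehat C$ of length $c$ is built as follows: every $x\in S\cap C'$ is placed in the row where $x$ occurs in $C'$; if $c=c'+1$, the largest element of $S\setminus C'$ is placed in row $c$; the remaining elements of $S\setminus C'$, in decreasing order, are placed in the rows occupied in $C'$ by the elements of $C'\setminus S$, in decreasing order (the $k$-th largest next to the $k$-th largest). A two-column configuration $(C,C')$ (left column $C$ of length $c$, right column $C'$) is HHL if the entries of each column are distinct, $C(j)\ne C'(r)$ whenever $r<j$, and $C(r)\le C'(r)$ for all $r\le c'$. A transposition of two entries $x,y$ of $C$ is legal with respect to $(C,C')$ if the column obtained from $C$ by swapping the positions of $x$ and $y$ forms, together with $C'$, an HHL configuration. Pivots: row $r$ is a pivot row of $(\widehat C,C')$ if either $r\le c'$ and $\widehat C(r)<C'(r)$, or $r=c'+1\le c$. If $q_1,\ldots,q_p$ are the pivot rows, the pivot entries of $\widehat C$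 are $b_j=\widehat C(q_j)$; set $d_j=C'(q_j)$ if $q_j\le c'$ and $d_j=\infty$ otherwise. $(\widehat C,C')$ satisfies the Non-overlapping Condition if $p\le1$, or if the intervals $[b_j,d_j]$ (meaning $[b_j,\infty)$ when $d_j=\infty$) are pairwise disjoint for $j\ne k$ in $[p]$. *)

theory Defs
  imports Main
begin

text \<open>Columns are lists of natural numbers; row r (1-based in the paper) is list index r-1.\<close>

definition col_conditions :: "nat list \<Rightarrow> nat set \<Rightarrow> bool" where
  "col_conditions C' S \<longleftrightarrow>
     distinct C' \<and> (\<forall>t\<in>set C'. 0 < t) \<and>
     finite S \<and> (\<forall>s\<in>S. 0 < s) \<and>
     (card S = length C' \<or> card S = length C' + 1) \<and>
     (\<forall>r < length C'. sorted_list_of_set S ! r \<le> sort C' ! r)"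

definition hat_col :: "nat list \<Rightarrow> nat set \<Rightarrow> nat list" where
  "hat_col C' S =
    (let A = S - set C';
         B = set C' - S;
         R = (if card S = length C' + 1 then A - {Max A} else A);
         Rdec = rev (sorted_list_of_set R)
     in map (\<lambda>i. if i < length C' then
                   (if C' ! i \<in> S then C' ! i
                    else Rdec ! card {b \<in> B. C' ! i < b})
                 else Max A) [0..<card S])"

definition HHL :: "nat list \<Rightarrow> nat list \<Rightarrow> bool" where
  "HHL C C' \<longleftrightarrow>
     distinct C \<and> distinct C' \<and>
     (\<forall>j r. j < length C \<and> r < length C' \<and> r < j \<longrightarrow> C ! j \<noteq> C' ! r) \<and>
     (\<forall>r. r < length C' \<and> r < length C \<longrightarrow> C ! r \<le> C' ! r)"

definition swap_entries :: "nat \<Rightarrow> nat \<Rightarrow> nat list \<Rightarrow> nat list" where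
  "swap_entries x y C = map (\<lambda>z. if z = x then y else if z = y then x else z) C"

definition legal_transp :: "nat \<Rightarrow> nat \<Rightarrow> nat list \<Rightarrow> nat list \<Rightarrow> bool" where
  "legal_transp x y C C' \<longleftrightarrow>
     x \<in> set C \<and> y \<in> set C \<and> HHL (swap_entries x y C) C'"

definition pivot_row :: "nat list \<Rightarrow> nat list \<Rightarrow> nat \<Rightarrow> bool" where
  "pivot_row Ch C' q \<longleftrightarrow>
     (q < length C' \<and> q < length Ch \<and> Ch ! q < C' ! q) \<or>
     (q = length C' \<and> length C' < length Ch)"

definition pivot_entry :: "nat list \<Rightarrow> nat list \<Rightarrow> nat \<Rightarrow> bool" where
  "pivot_entry Ch C' x \<longleftrightarrow> (\<exists>q. pivot_row Ch C' q \<and> Ch ! q = x)"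

text \<open>Interval [b_j, d_j] attached to pivot row q (unbounded if d_j = infinity),
  as a set of integers (entries are integers, so disjointness is unaffected).\<close>
definition pivot_interval :: "nat list \<Rightarrow> nat list \<Rightarrow> nat \<Rightarrow> nat set" where
  "pivot_interval Ch C' q =
     (if q < length C' then {Ch ! q .. C' ! q} else {Ch ! q ..})"

definition non_overlapping :: "nat list \<Rightarrow> nat list \<Rightarrow> bool" where
  "non_overlapping Ch C' \<longleftrightarrow>
     (\<forall>q1 q2. pivot_row Ch C' q1 \<and> pivot_row Ch C' q2 \<and> q1 \<noteq> q2 \<longrightarrow>
        pivot_interval Ch C' q1 \<inter> pivot_interval Ch C' q2 = {})"

end

theory Submission
  imports Defs
begin

text \<open>
  Let x < y be the two pivot entries. The extra last row of hat C holds the maximum of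
  S - C', so x lies in a row q of C' with L = C'(q) > x. Disjointness of the pivot
  intervals forces y > L, and also forces every entry of hat C in a row r with r beyond C'
  or C'(r) > L to exceed L: such an entry is either C'(r) itself, or, by monotonicity of
  the rank matching, a filler v > x, and v \<le> L would make r a pivot row whose interval
  [v, C'(r)] meets [x, L]. Since hat C has distinct entries from S, there are at most
  #{z \<in> S. z > L} such rows. On the other hand, C(r) \<le> C'(r) puts every z \<in> S with z > L
  into such a row of C, and so is the row of x, because the legal transposition moves
  y > L into it. Counting gives the contradiction.
\<close>

definition match_by_rank :: "'a::linorder set \<Rightarrow> 'a set \<Rightarrow> 'a \<Rightarrow> 'a" where
  "match_by_rank B R b = rev (sorted_list_of_set R) ! card {b' \<in> B. b < b'}"

lemma card_greater_less_card:
  fixes B :: "'a::linorder set"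
  assumes "finite B" "b \<in> B"
  shows "card {b' \<in> B. b < b'} < card B"
  by (rule psubset_card_mono) (use assms in auto)

lemma card_greater_strict_antimono:
  fixes B :: "'a::linorder set"
  assumes "finite B" "b2 \<in> B" "b1 < b2"
  shows "card {b' \<in> B. b2 < b'} < card {b' \<in> B. b1 < b'}"
  by (rule psubset_card_mono) (use assms in auto)

lemma match_by_rank_in:
  assumes "finite B" "finite R" "card R = card B" "b \<in> B"
  shows "match_by_rank B R b \<in> R"
proof -
  have "card {b' \<in> B. b < b'} < length (rev (sorted_list_of_set R))"
    using card_greater_less_card[OF assms(1,4)] assms(3) by simp
  then have "match_by_rank B R b \<in> set (rev (sorted_list_of_set R))"
    unfolding match_by_rank_def by (rule nth_mem)
  then show ?thesis
    using assms(2) by simp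
qed

lemma match_by_rank_strict_mono:
  assumes "finite B" "finite R" "card R = card B"
  shows "strict_mono_on B (match_by_rank B R)"
proof (rule strict_mono_onI)
  fix b1 b2 assume b: "b1 \<in> B" "b2 \<in> B" "b1 < b2"
  have "sorted_wrt (>) (rev (sorted_list_of_set R))"
    by (simp add: sorted_wrt_rev)
  moreover have "card {b' \<in> B. b2 < b'} < card {b' \<in> B. b1 < b'}"
    using card_greater_strict_antimono[OF assms(1) b(2,3)] .
  moreover have "card {b' \<in> B. b1 < b'} < length (rev (sorted_list_of_set R))"
    using card_greater_less_card[OF assms(1) b(1)] assms(3) by simp
  ultimately show "match_by_rank B R b1 < match_by_rank B R b2"
    unfolding match_by_rank_def by (rule sorted_wrt_nth_less)
qed

lemma swap_entries_commute: "swap_entries x y C = swap_entries y x C"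
  by (auto simp: swap_entries_def)

lemma legal_transp_commute: "legal_transp x y C C' \<longleftrightarrow> legal_transp y x C C'"
  by (auto simp: legal_transp_def swap_entries_commute)

lemma legal_transp_nth_le:
  assumes "legal_transp x y C C'" "i < length C" "i < length C'" "C ! i = x"
  shows "y \<le> C' ! i"
proof -
  have "swap_entries x y C ! i = y"
    using assms(2,4) by (simp add: swap_entries_def)
  then show ?thesis
    using assms(1-3) by (auto simp: legal_transp_def HHL_def swap_entries_def)
qed

lemma HHL_greater_in_image_rows:
  assumes "HHL C C'" "z \<in> set C" "L < z"
  shows "z \<in> (!) C ` {r. r < length C \<and> (length C' \<le> r \<or> L < C' ! r)}"
proof -
  obtain r where r: "r < length C" "C ! r = z"
    using assms(2) by (auto simp: in_set_conv_nth)
  have "r < length C' \<Longrightarrow> z \<le> C' ! r"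
    using assms(1) r by (auto simp: HHL_def)
  then show ?thesis
    using r assms(3) by force
qed

lemma non_overlapping_pivot_less:
  assumes "non_overlapping Ch C'" "pivot_row Ch C' q" "pivot_row Ch C' r" "r \<noteq> q"
    and "q < length C'" "Ch ! q \<le> Ch ! r"
  shows "C' ! q < Ch ! r"
proof (rule ccontr)
  assume "\<not> C' ! q < Ch ! r"
  then have "Ch ! r \<in> pivot_interval Ch C' q"
    using assms(5,6) by (simp add: pivot_interval_def)
  moreover have "Ch ! r \<in> pivot_interval Ch C' r"
    using assms(3) by (auto simp: pivot_interval_def pivot_row_def)
  ultimately show False
    using assms(1-4) by (auto simp: non_overlapping_def)
qed

definition hat_rest :: "nat list \<Rightarrow> nat set \<Rightarrow> nat set" where
  "hat_rest C' S =
     (if card S = length C' + 1 then (S - set C') - {Max (S - set C')} else S - set C')"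

lemma length_hat_col: "length (hat_col C' S) = card S"
  by (simp add: hat_col_def Let_def)

lemma nth_hat_col:
  assumes "i < card S"
  shows "hat_col C' S ! i =
    (if i < length C'
     then if C' ! i \<in> S then C' ! i else match_by_rank (set C' - S) (hat_rest C' S) (C' ! i)
     else Max (S - set C'))"
  using assms by (simp add: hat_col_def Let_def hat_rest_def match_by_rank_def)

locale hat_construction =
  fixes C' :: "nat list" and S :: "nat set"
  assumes col_conditions: "col_conditions C' S"
begin

abbreviation "H \<equiv> hat_col C' S"
abbreviation "n \<equiv> length C'"
abbreviation fill :: "nat \<Rightarrow> nat" where
  "fill \<equiv> match_by_rank (set C' - S) (hat_rest C' S)"

lemma finite_S: "finite S"
  and distinct_C': "distinct C'"
  and card_S_cases: "card S = n \<or> card S = n + 1"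
  using col_conditions by (auto simp: col_conditions_def)

lemma Max_diff_in:
  assumes "card S = n + 1"
  shows "Max (S - set C') \<in> S - set C'"
proof -
  have "\<not> S \<subseteq> set C'"
    using card_mono[of "set C'" S] card_length[of C'] assms by auto
  then show ?thesis
    using finite_S by (intro Max_in) auto
qed

lemma card_hat_rest: "card (hat_rest C' S) = card (set C' - S)"
proof -
  let ?k = "card (S \<inter> set C')"
  have "card (S - set C') = card S - ?k"
    using finite_S by (simp add: card_Diff_subset_Int)
  moreover have "card (set C' - S) = n - ?k"
    using distinct_C' by (simp add: card_Diff_subset_Int Int_commute distinct_card)
  moreover have "?k \<le> n"
    using card_mono[of "set C'" "S \<inter> set C'"] card_length[of C'] by auto
  ultimately show ?thesis
    using card_S_cases Max_diff_in finite_S by (auto simp: hat_rest_def)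
qed

lemma finite_hat_rest: "finite (hat_rest C' S)"
  using finite_S by (simp add: hat_rest_def)

lemma fill_in_hat_rest: "b \<in> set C' - S \<Longrightarrow> fill b \<in> hat_rest C' S"
  by (rule match_by_rank_in) (simp_all add: finite_hat_rest card_hat_rest)

lemma strict_mono_fill: "strict_mono_on (set C' - S) fill"
  by (rule match_by_rank_strict_mono) (simp_all add: finite_hat_rest card_hat_rest)

lemma nth_hat_col_cases:
  assumes "i < card S"
  obtains (kept) "i < n" "C' ! i \<in> S" "H ! i = C' ! i"
    | (filled) "i < n" "C' ! i \<notin> S" "H ! i = fill (C' ! i)"
    | (last) "i = n" "card S = n + 1" "H ! i = Max (S - set C')"
  using assms card_S_cases nth_hat_col[OF assms] by (cases "i < n") auto

lemma nth_hat_col_in: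
  assumes "i < card S"
  shows "H ! i \<in> S"
  using assms
  by (cases rule: nth_hat_col_cases) (use fill_in_hat_rest Max_diff_in in \<open>auto simp: hat_rest_def\<close>)

lemma nth_hat_col_inject:
  assumes ij: "i < card S" "j < card S" "H ! i = H ! j"
  shows "i = j"
proof -
  have fill_disjoint: "k < n \<Longrightarrow> C' ! k \<notin> S \<Longrightarrow>
      fill (C' ! k) \<notin> set C' \<and> (card S = n + 1 \<longrightarrow> fill (C' ! k) \<noteq> Max (S - set C'))" for k
    using fill_in_hat_rest[of "C' ! k"] by (auto simp: hat_rest_def)
  have inj_fill: "inj_on fill (set C' - S)"
    using strict_mono_fill by (rule strict_mono_on_imp_inj_on)
  from ij(1) show "i = j"
  proof (cases rule: nth_hat_col_cases)
    case kept
    from ij(2) show ?thesis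
      by (cases rule: nth_hat_col_cases)
        (use kept ij(3) distinct_C' Max_diff_in fill_disjoint[of j] nth_mem[OF kept(1)] in
          \<open>auto simp: nth_eq_iff_index_eq\<close>)
  next
    case filled
    from ij(2) show ?thesis
      by (cases rule: nth_hat_col_cases)
        (use filled ij(3) distinct_C' fill_disjoint[of i] nth_mem[of j C'] in
          \<open>auto simp: nth_eq_iff_index_eq inj_on_eq_iff[OF inj_fill]\<close>)
  next
    case last
    from ij(2) show ?thesis
      by (cases rule: nth_hat_col_cases) (use last ij(3) Max_diff_in fill_disjoint[of j] in auto)
  qed
qed

lemma distinct_hat_col: "distinct H"
  by (auto simp: distinct_conv_nth length_hat_col dest: nth_hat_col_inject)

lemma pivot_row_hat_colE:
  assumes "pivot_row H C' q"
  obtains (filled) "q < n" "C' ! q \<notin> S" "H ! q = fill (C' ! q)" "H ! q < C' ! q"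
    | (last) "q = n" "card S = n + 1" "H ! q = Max (S - set C')"
proof -
  have "q < card S"
    using assms by (auto simp: pivot_row_def length_hat_col)
  then show ?thesis
    using assms that by (cases rule: nth_hat_col_cases) (auto simp: pivot_row_def)
qed

lemma pivot_row_hat_col_in_diff:
  assumes "pivot_row H C' q"
  shows "H ! q \<in> S - set C'"
  using assms
proof (cases rule: pivot_row_hat_colE)
  case filled
  then show ?thesis
    using fill_in_hat_rest[of "C' ! q"] by (auto simp: hat_rest_def)
next
  case last
  then show ?thesis
    using Max_diff_in by simp
qed

lemma hat_col_above_pivot:
  assumes NO: "non_overlapping H C'" and q: "pivot_row H C' q" "q < n"
    and r: "r < card S" "n \<le> r \<or> C' ! q < C' ! r"
  shows "C' ! q < H ! r"
proof -
  from q(1) have q_filled: "C' ! q \<notin> S \<and> H ! q = fill (C' ! q)"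
    by (cases rule: pivot_row_hat_colE) (use q(2) in simp_all)
  from r(1) show ?thesis
  proof (cases rule: nth_hat_col_cases)
    case kept
    then show ?thesis
      using r(2) by simp
  next
    case filled
    show ?thesis
    proof (cases "H ! r < C' ! r")
      case True
      then have "pivot_row H C' r"
        using filled r(1) by (simp add: pivot_row_def length_hat_col)
      moreover have "r \<noteq> q"
        using filled r(2) by auto
      moreover have "H ! q \<le> H ! r"
        using strict_mono_fill q_filled filled r(2) q(2)
        by (auto simp: strict_mono_on_def less_imp_le)
      ultimately show ?thesis
        by (rule non_overlapping_pivot_less[OF NO q(1) _ _ q(2)])
    next
      case False
      then show ?thesis
        using filled r(2) by simp
    qed
  next
    case last
    have "pivot_row H C' r"
      using last by (simp add: pivot_row_def length_hat_col)
    moreover have "r \<noteq> q"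
      using last q(2) by simp
    moreover have "H ! q \<le> H ! r"
      using last pivot_row_hat_col_in_diff[OF q(1)] finite_S by simp
    ultimately show ?thesis
      by (rule non_overlapping_pivot_less[OF NO q(1) _ _ q(2)])
  qed
qed

lemma legal_transp_pivots_overlap:
  assumes C: "set C = S" "length C = card S" "HHL C C'"
    and xy: "x < y" "pivot_entry H C' x" "pivot_entry H C' y"
    and legal: "legal_transp x y C C'"
  shows "\<not> non_overlapping H C'"
proof
  assume NO: "non_overlapping H C'"
  obtain q1 q2 where q1: "pivot_row H C' q1" "H ! q1 = x" and q2: "pivot_row H C' q2" "H ! q2 = y"
    using xy(2,3) by (auto simp: pivot_entry_def)
  have "q1 < n"
  proof (rule ccontr)
    assume "\<not> q1 < n"
    with q1 have "x = Max (S - set C')"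
      by (cases rule: pivot_row_hat_colE) auto
    moreover have "y \<le> Max (S - set C')"
      using pivot_row_hat_col_in_diff[OF q2(1)] q2(2) finite_S by (intro Max_ge) auto
    ultimately show False
      using xy(1) by simp
  qed
  define L where "L = C' ! q1"
  have "x < L"
    using q1 \<open>q1 < n\<close> by (auto simp: pivot_row_def L_def)
  have "L < y"
    using non_overlapping_pivot_less[OF NO q1(1) q2(1) _ \<open>q1 < n\<close>] q1(2) q2(2) xy(1)
    by (auto simp: L_def)
  define Rows where "Rows = {r. r < card S \<and> (n \<le> r \<or> L < C' ! r)}"
  have "(!) H ` Rows \<subseteq> {z \<in> S. L < z}"
    using hat_col_above_pivot[OF NO q1(1) \<open>q1 < n\<close>] nth_hat_col_in
    by (auto simp: Rows_def L_def)
  moreover have "inj_on ((!) H) Rows"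
    using distinct_hat_col by (rule inj_on_nth) (simp add: Rows_def length_hat_col)
  ultimately have upper: "card Rows \<le> card {z \<in> S. L < z}"
    using finite_S by (intro card_inj_on_le) auto
  obtain i where i: "i < length C" "C ! i = x"
    using pivot_row_hat_col_in_diff[OF q1(1)] q1(2) C(1) by (auto simp: in_set_conv_nth)
  have "i \<in> Rows"
  proof (cases "i < n")
    case True
    then have "y \<le> C' ! i"
      using legal_transp_nth_le[OF legal i(1) _ i(2)] by simp
    then show ?thesis
      using i(1) C(2) \<open>L < y\<close> by (simp add: Rows_def)
  next
    case False
    then show ?thesis
      using i(1) C(2) by (simp add: Rows_def)
  qed
  then have "insert x {z \<in> S. L < z} \<subseteq> (!) C ` Rows"
    using HHL_greater_in_image_rows[OF C(3)] i(2) C(1,2) by (auto simp: Rows_def)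
  moreover have "finite Rows"
    by (simp add: Rows_def)
  ultimately have "card (insert x {z \<in> S. L < z}) \<le> card ((!) C ` Rows)"
    by (intro card_mono) simp_all
  also have "\<dots> \<le> card Rows"
    using \<open>finite Rows\<close> by (rule card_image_le)
  finally show False
    using upper \<open>x < L\<close> finite_S by simp
qed

end

theorem lemma4p1:
  fixes C C' :: "nat list" and S :: "nat set" and x y :: nat
  assumes "col_conditions C' S"
    and "set C = S" and "length C = card S"
    and "HHL C C'"
    and "x \<noteq> y"
    and "pivot_entry (hat_col C' S) C' x"
    and "pivot_entry (hat_col C' S) C' y"
    and "legal_transp x y C C'"
  shows "\<not> non_overlapping (hat_col C' S) C'"
proof -
  interpret hat_construction C' S
    by (rule hat_construction.intro) (fact assms(1))
  consider "x < y" | "y < x"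
    using assms(5) by linarith
  then show ?thesis
  proof cases
    case 1
    show ?thesis
      by (rule legal_transp_pivots_overlap[OF assms(2-4) 1 assms(6,7,8)])
  next
    case 2
    show ?thesis
      using legal_transp_pivots_overlap[OF assms(2-4) 2 assms(7,6)] assms(8)
      by (simp add: legal_transp_commute[of y x])
  qed
qed

end
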